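(* For $\tau\in\mathbb{R}$ and integer $n\ge0$ let $$\mu_{2n}(\tau;\tfrac14)=\int_{-\infty}^{\infty}x^{2n}\exp\left\{-\left(x^6-\tau x^4+\tfrac14\tau^2x^2\right)\right\}dx.$$ Then \begin{align*} \mu_{2n}(\tau;\tfrac14)&=\tfrac13\Gamma\!\left(\tfrac13n+\tfrac16\right){}_2F_2\!\left(\tfrac13-\tfrac13n,\tfrac13+\tfrac23n;\tfrac13,\tfrac23;-\tfrac{\tau^3}{54}\right)+\tfrac13\tau\Gamma\!\left(\tfrac13n+\tfrac56\right){}_2F_2\!\left(\tfrac23-\tfrac13n,\tfrac23+\tfrac23n;\tfrac23,\tfrac43;-\tfrac{\tau^3}{54}\right)\\ &\quad+\frac{n\tau^2}{18}\Gamma\!\left(\tfrac13n+\tfrac12\right){}_2F_2\!\left(1-\tfrac13n,1+\tfrac23n;\tfrac43,\tfrac53;-\tfrac{\tau^3}{54}\right). \end{align*}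
   Context: ${}_2F_2(a_1,a_2;b_1,b_2;z)$ denotes the generalised hypergeometric function with upper parameters $a_1,a_2$ and lower parameters $b_1,b_2$. *)

theory Defs
  imports "HOL-Analysis.Analysis"
begin

definition hyp2F2 :: "real \<Rightarrow> real \<Rightarrow> real \<Rightarrow> real \<Rightarrow> real \<Rightarrow> real" where
  "hyp2F2 a1 a2 b1 b2 z =
     (\<Sum>k. pochhammer a1 k * pochhammer a2 k / (pochhammer b1 k * pochhammer b2 k)
            * z ^ k / fact k)"

definition mu :: "nat \<Rightarrow> real \<Rightarrow> real" where
  "mu n \<tau> = (\<integral>x. x ^ (2*n) * exp (- (x ^ 6 - \<tau> * x ^ 4 + \<tau>\<^sup>2 / 4 * x\<^sup>2)) \<partial>lborel)"

end

(* Expanding exp (tau x^4 - tau^2 x^2 / 4) = sum_k Q_k(x) tau^k / k! and integrating termwise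
   against x^(2n) exp (-x^6) gives mu_(2n) = sum_k e_k tau^k / k!, where
   e_k = int x^(2n) Q_k(x) exp (-x^6) dx.  The Q_k obey a three-term recurrence, and with it one
   finds a polynomial R_k with R_k' - 6 x^5 R_k = x^(2n) (18 Q_(k+3) + (k+1-n)(k+1+2n) Q_k);
   integrating by parts against exp (-x^6) yields 18 e_(k+3) = -(k+1-n)(k+1+2n) e_k.  Hence the
   series splits by k mod 3 into three 2F2 series in -tau^3/54, whose leading terms e_0, e_1, e_2
   are Gamma values. *)

theory Submission
  imports Defs "HOL-Computational_Algebra.Polynomial"
begin

lemma nn_integral_atLeast_eq_SUP:
  fixes f :: "real \<Rightarrow> ennreal" and h :: "nat \<Rightarrow> real"
  assumes [measurable]: "f \<in> borel_measurable borel"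
    and "incseq h" and "filterlim h at_top sequentially"
  shows "(\<integral>\<^sup>+x. f x * indicator {a..} x \<partial>lborel) =
         (SUP j. \<integral>\<^sup>+x. f x * indicator {a..h j} x \<partial>lborel)"
proof -
  have "(SUP j. f x * indicator {a..h j} x) = f x * indicator {a..} x" for x
  proof (cases "x \<ge> a")
    case True
    obtain j where "h j \<ge> x"
      using assms(3) by (auto simp: filterlim_at_top eventually_sequentially)
    then have "f x \<le> (SUP j. f x * indicator {a..h j} x)"
      using True by (intro SUP_upper2[of j]) auto
    moreover have "(SUP j. f x * indicator {a..h j} x) \<le> f x"
      by (intro SUP_least) (auto split: split_indicator)
    ultimately show ?thesis
      using True by (auto intro: antisym)
  qed auto
  moreover have "incseq (\<lambda>j x. f x * indicator {a..h j} x)"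
    using assms(2) by (auto simp: incseq_def le_fun_def split: split_indicator intro: order_trans)
  ultimately show ?thesis
    by (simp add: nn_integral_monotone_convergence_SUP[symmetric])
qed

lemma Gamma_integrand_power_substitution:
  fixes x :: real and k m :: nat
  assumes "m > 0" "x > 0"
  shows "(x ^ m) powr ((k + 1) / m - 1) / exp (x ^ m) * (m * x ^ (m - 1)) = m * (x ^ k * exp (- (x ^ m)))"
proof -
  have "(x ^ m) powr ((k + 1) / m - 1) * x ^ (m - 1) = x powr (m * ((k + 1) / m - 1) + real (m - 1))"
    using assms by (simp add: powr_powr powr_add powr_realpow[symmetric])
  also have "m * ((k + 1) / m - 1) + real (m - 1) = real k"
    using assms by (simp add: of_nat_diff field_simps)
  finally show ?thesis
    using assms by (simp add: powr_realpow exp_minus field_simps)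
qed

lemma nn_integral_Gamma_integrand_power_substitution:
  fixes k m :: nat and b :: real
  assumes "m > 0" "b \<ge> 0"
  shows "(\<integral>\<^sup>+t. ennreal (t powr ((k + 1) / m - 1) / exp t) * indicator {0..b ^ m} t \<partial>lborel)
         = m * (\<integral>\<^sup>+x. ennreal (x ^ k * exp (- (x ^ m))) * indicator {0..b} x \<partial>lborel)"
proof -
  define G where "G t = t powr ((k + 1) / m - 1) / exp t" for t :: real
  have "(\<integral>\<^sup>+t. ennreal (G t) * indicator {0..b ^ m} t \<partial>lborel)
      = (\<integral>\<^sup>+t. ennreal (G t * indicator {0 ^ m..b ^ m} t) \<partial>lborel)"
    using assms by (intro nn_integral_cong) (auto simp: zero_power split: split_indicator)
  also have "\<dots> = (\<integral>\<^sup>+x. ennreal (G (x ^ m) * (m * x ^ (m - 1)) * indicator {0..b} x) \<partial>lborel)"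
    unfolding G_def
    by (rule nn_integral_substitution[where g = "\<lambda>x. x ^ m" and g' = "\<lambda>x. m * x ^ (m - 1)"])
       (use assms in \<open>auto intro!: derivative_eq_intros continuous_intros simp: set_borel_measurable_def\<close>)
  also have "\<dots> = (\<integral>\<^sup>+x. m * (ennreal (x ^ k * exp (- (x ^ m))) * indicator {0..b} x) \<partial>lborel)"
  proof (intro nn_integral_cong_AE eventually_mono[OF AE_lborel_singleton[of 0]])
    fix x :: real
    assume "x \<noteq> 0"
    then show "ennreal (G (x ^ m) * (m * x ^ (m - 1)) * indicator {0..b} x)
        = m * (ennreal (x ^ k * exp (- (x ^ m))) * indicator {0..b} x)"
      using Gamma_integrand_power_substitution[OF assms(1), of x k]
      by (auto simp: G_def ennreal_mult' ennreal_of_nat_eq_real_of_nat split: split_indicator)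
  qed
  finally show ?thesis
    by (simp add: G_def nn_integral_cmult)
qed

lemma nn_integral_power_exp_neg_power:
  fixes k m :: nat
  assumes "m > 0"
  shows "(\<integral>\<^sup>+x. ennreal (x ^ k * exp (- (x ^ m))) * indicator {0..} x \<partial>lborel)
         = ennreal (Gamma ((k + 1) / m) / m)"
proof -
  define s :: real where "s = (k + 1) / m"
  have s: "s > 0"
    using assms by (simp add: s_def)
  define G where "G t = t powr (s - 1) / exp t" for t :: real
  define f where "f x = ennreal (x ^ k * exp (- (x ^ m)))" for x :: real
  have [measurable]: "G \<in> borel_measurable borel" "f \<in> borel_measurable borel"
    unfolding G_def f_def by measurable
  have "ennreal (Gamma s) = (\<integral>\<^sup>+t. ennreal (G t) * indicator {0..} t \<partial>lborel)"
    unfolding Gamma_conv_nn_integral_real[OF s] G_def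
    by (intro nn_integral_cong) (auto split: split_indicator)
  also have "\<dots> = (SUP j. \<integral>\<^sup>+t. ennreal (G t) * indicator {0..real j ^ m} t \<partial>lborel)"
    using assms
    by (intro nn_integral_atLeast_eq_SUP)
       (auto simp: incseq_def power_mono intro!: filterlim_pow_at_top filterlim_real_sequentially)
  also have "\<dots> = m * (SUP j. \<integral>\<^sup>+x. f x * indicator {0..real j} x \<partial>lborel)"
    using nn_integral_Gamma_integrand_power_substitution[OF assms]
    by (simp add: G_def f_def s_def SUP_mult_left_ennreal)
  also have "(SUP j. \<integral>\<^sup>+x. f x * indicator {0..real j} x \<partial>lborel) = (\<integral>\<^sup>+x. f x * indicator {0..} x \<partial>lborel)"
    by (rule nn_integral_atLeast_eq_SUP[symmetric])
       (auto simp: incseq_def filterlim_real_sequentially)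
  finally have "(\<integral>\<^sup>+x. f x * indicator {0..} x \<partial>lborel) = ennreal (Gamma s) / of_nat m"
    using assms by (simp add: ennreal_mult_divide_eq mult.commute[of "of_nat m :: ennreal"])
  also have "\<dots> = ennreal (Gamma s / m)"
    using Gamma_real_pos[OF s] assms
    by (metis divide_ennreal ennreal_of_nat_eq_real_of_nat less_imp_le of_nat_0_less_iff)
  finally show ?thesis
    by (simp add: f_def s_def)
qed

lemma abs_odd_power_le: "\<bar>x\<bar> ^ (2 * p + 1) \<le> x ^ (2 * p) + x ^ (2 * p + 2)" for x :: real
proof -
  have "0 \<le> (\<bar>x\<bar> - 1) * (\<bar>x\<bar> - 1)" "0 \<le> \<bar>x\<bar> * \<bar>x\<bar>"
    by simp_all
  then have "\<bar>x\<bar> \<le> 1 + \<bar>x\<bar> * \<bar>x\<bar>"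
    by (simp add: algebra_simps del: abs_mult_self_eq)
  then have "\<bar>x\<bar> ^ (2 * p) * \<bar>x\<bar> \<le> \<bar>x\<bar> ^ (2 * p) * (1 + \<bar>x\<bar> * \<bar>x\<bar>)"
    by (intro mult_left_mono) auto
  then show ?thesis
    by (simp add: power_even_abs algebra_simps power_add)
qed

lemma quadratic_minus_half_cube_le:
  fixes a b y :: real
  assumes "a \<ge> 0" "b \<ge> 0" "y \<ge> 0"
  shows "a * y\<^sup>2 + b * y - y ^ 3 / 2 \<le> a * (2 * a + 2 * b + 1)\<^sup>2 + b * (2 * a + 2 * b + 1)"
proof (cases "y \<le> 2 * a + 2 * b + 1")
  case True
  have "a * y\<^sup>2 \<le> a * (2 * a + 2 * b + 1)\<^sup>2" "b * y \<le> b * (2 * a + 2 * b + 1)"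
    using True assms by (auto intro!: mult_left_mono power_mono)
  moreover have "y ^ 3 \<ge> 0"
    using assms by simp
  ultimately show ?thesis
    by linarith
next
  case False
  then have "(2 * a + 2 * b + 1) * y\<^sup>2 \<le> y * y\<^sup>2" "y * 1 \<le> y * y"
    using assms by (auto intro!: mult_right_mono mult_left_mono)
  then have "2 * (a * y\<^sup>2) + 2 * (b * y) + y\<^sup>2 \<le> y ^ 3"
    using assms mult_left_mono[of y "y\<^sup>2" b]
    by (simp add: power2_eq_square power3_eq_cube algebra_simps)
  moreover have "0 \<le> a * (2 * a + 2 * b + 1)\<^sup>2 + b * (2 * a + 2 * b + 1)"
    using assms by simp
  ultimately show ?thesis
    using mult_nonneg_nonneg[OF assms(3) assms(3)] unfolding power2_eq_square by linarith
qed

lemma sums_from_even_terms: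
  assumes "(\<lambda>l. f (2 * l)) sums c" and "\<And>j. odd j \<Longrightarrow> f j = 0"
  shows "f sums c"
proof -
  have "strict_mono (\<lambda>l::nat. 2 * l)"
    by (auto simp: strict_mono_def)
  moreover have "f j = 0" if "j \<notin> range (\<lambda>l::nat. 2 * l)" for j
    using that assms(2) by (metis evenE rangeI)
  ultimately show ?thesis
    using sums_mono_reindex[of "\<lambda>l. 2 * l" f c] assms(1) by simp
qed

lemma exp_series_real: "(\<lambda>i. z ^ i / fact i) sums exp (z :: real)"
  using exp_converges[of z] by (simp add: divide_inverse mult.commute)

lemma suminf_split_residues:
  fixes u :: "nat \<Rightarrow> 'a :: banach"
  assumes summable: "summable (\<lambda>k. norm (u k))" and "m > 0"
  shows "j < m \<Longrightarrow> summable (\<lambda>i. u (m * i + j))"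
    and "suminf u = (\<Sum>j<m. \<Sum>i. u (m * i + j))"
proof -
  define w where "w j k = (if k mod m = j then u k else 0)" for j k
  have summable_w: "summable (w j)" for j
    by (rule summable_comparison_test[OF _ summable]) (auto simp: w_def)
  have w_sums: "(\<lambda>i. u (m * i + j)) sums suminf (w j)" if "j < m" for j
  proof -
    have "w j k = 0" if "k \<notin> range (\<lambda>i. m * i + j)" for k
    proof (cases "k mod m = j")
      case True
      then have "k = m * (k div m) + j"
        by (metis mult_div_mod_eq)
      then show ?thesis
        using that by (metis rangeI)
    qed (simp add: w_def)
    moreover have "strict_mono (\<lambda>i. m * i + j)"
      using \<open>m > 0\<close> by (auto simp: strict_mono_def)
    moreover have "w j (m * i + j) = u (m * i + j)" for i
      using that by (simp add: w_def)
    ultimately show ?thesis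
      using sums_mono_reindex[of "\<lambda>i. m * i + j" "w j"] summable_w[of j] by (simp add: summable_sums)
  qed
  show "j < m \<Longrightarrow> summable (\<lambda>i. u (m * i + j))"
    using w_sums by (auto intro: sums_summable)
  have "u k = (\<Sum>j<m. w j k)" for k
    using \<open>m > 0\<close> by (simp add: w_def)
  then have "suminf u = (\<Sum>k. \<Sum>j<m. w j k)"
    by (rule suminf_cong)
  also have "\<dots> = (\<Sum>j<m. suminf (w j))"
    using summable_w by (rule suminf_sum)
  also have "\<dots> = (\<Sum>j<m. \<Sum>i. u (m * i + j))"
    using w_sums by (simp add: sums_iff)
  finally show "suminf u = (\<Sum>j<m. \<Sum>i. u (m * i + j))" .
qed

lemma suminf_eq_hyp2F2:
  fixes v :: "nat \<Rightarrow> real"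
  assumes "summable v"
    and b: "\<And>m. b1 + real m \<noteq> 0" "\<And>m. b2 + real m \<noteq> 0"
    and ratio: "\<And>m. (b1 + real m) * (b2 + real m) * (real m + 1) * v (Suc m) = (a1 + real m) * (a2 + real m) * z * v m"
  shows "suminf v = v 0 * hyp2F2 a1 a2 b1 b2 z"
proof -
  define c where "c = v 0"
  define h where "h k = pochhammer a1 k * pochhammer a2 k / (pochhammer b1 k * pochhammer b2 k) * z ^ k / fact k" for k
  have cleared: "v k * (pochhammer b1 k * pochhammer b2 k * fact k) = v 0 * (pochhammer a1 k * pochhammer a2 k * z ^ k)" for k
  proof (induction k)
    case (Suc k)
    have "v (Suc k) * (pochhammer b1 (Suc k) * pochhammer b2 (Suc k) * fact (Suc k))
        = ((b1 + real k) * (b2 + real k) * (real k + 1) * v (Suc k)) * (pochhammer b1 k * pochhammer b2 k * fact k)"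
      unfolding pochhammer_Suc fact_Suc of_nat_Suc by (simp only: mult_ac add.commute)
    also have "\<dots> = (a1 + real k) * (a2 + real k) * z * (v k * (pochhammer b1 k * pochhammer b2 k * fact k))"
      unfolding ratio by (simp only: mult_ac)
    also have "\<dots> = v 0 * (pochhammer a1 (Suc k) * pochhammer a2 (Suc k) * z ^ Suc k)"
      unfolding Suc.IH pochhammer_Suc power_Suc by (simp only: mult_ac)
    finally show ?case .
  qed simp
  have "pochhammer b1 k * pochhammer b2 k * fact k \<noteq> 0" for k
    using b by (simp add: pochhammer_eq_0_iff eq_neg_iff_add_eq_0)
  then have v: "v k = c * h k" for k
    using cleared[of k] unfolding h_def c_def by (simp add: divide_simps mult_ac)
  have "suminf v = (\<Sum>k. c * h k)"
    using v by (rule suminf_cong)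
  also have "\<dots> = c * suminf h"
  proof (cases "c = 0")
    case False
    have "summable (\<lambda>k. 1 / c * v k)"
      using \<open>summable v\<close> by (rule summable_mult)
    then have "summable h"
      using False by (simp add: v)
    then show ?thesis
      by (rule suminf_mult)
  qed simp
  finally show ?thesis
    unfolding c_def hyp2F2_def h_def .
qed

section \<open>Moments of the weight exp(-x^6)\<close>

definition sextic_moment :: "nat \<Rightarrow> real" where
  "sextic_moment q = (if even q then Gamma ((real q + 1) / 6) / 3 else 0)"

lemma nn_integral_even_power_exp_neg_sextic:
  "(\<integral>\<^sup>+x. ennreal (x ^ (2 * p) * exp (- (x ^ 6))) \<partial>lborel) = ennreal (Gamma ((2 * real p + 1) / 6) / 3)"
proof -
  define f where "f x = ennreal (x ^ (2 * p) * exp (- (x ^ 6)))" for x :: real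
  have [measurable]: "f \<in> borel_measurable borel"
    unfolding f_def by measurable
  have half: "(\<integral>\<^sup>+x. f x * indicator {0..} x \<partial>lborel) = ennreal (Gamma ((2 * real p + 1) / 6) / 6)"
    using nn_integral_power_exp_neg_power[of 6 "2 * p"] by (simp add: f_def add.commute)
  have "(\<integral>\<^sup>+x. f x * indicator {..<0} x \<partial>lborel)
      = (\<integral>\<^sup>+x. f (0 + (-1) * x) * indicator {..<0} (0 + (-1) * x) \<partial>lborel)"
    by (subst nn_integral_real_affine[of _ "-1" 0]) auto
  also have "\<dots> = (\<integral>\<^sup>+x. f x * indicator {0..} x \<partial>lborel)"
    by (intro nn_integral_cong_AE eventually_mono[OF AE_lborel_singleton[of 0]])
       (auto simp: f_def split: split_indicator)
  finally have reflect: "(\<integral>\<^sup>+x. f x * indicator {..<0} x \<partial>lborel) = (\<integral>\<^sup>+x. f x * indicator {0..} x \<partial>lborel)" .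
  have "(\<integral>\<^sup>+x. f x \<partial>lborel) = (\<integral>\<^sup>+x. f x * indicator {0..} x + f x * indicator {..<0} x \<partial>lborel)"
    by (intro nn_integral_cong) (auto split: split_indicator)
  also have "\<dots> = ennreal (Gamma ((2 * real p + 1) / 6) / 6) + ennreal (Gamma ((2 * real p + 1) / 6) / 6)"
    by (simp add: nn_integral_add reflect half)
  also have "\<dots> = ennreal (Gamma ((2 * real p + 1) / 6) / 3)"
    by (subst ennreal_plus[symmetric]) (auto intro!: Gamma_real_pos divide_nonneg_pos less_imp_le)
  finally show ?thesis
    unfolding f_def .
qed

lemma integrable_power_exp_neg_sextic: "integrable lborel (\<lambda>x::real. x ^ q * exp (- (x ^ 6)))"
proof -
  have even: "integrable lborel (\<lambda>x::real. x ^ (2 * p) * exp (- (x ^ 6)))" for p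
    by (rule integrableI_nn_integral_finite[OF _ _ nn_integral_even_power_exp_neg_sextic]) auto
  show ?thesis
  proof (cases "even q")
    case True
    then show ?thesis
      using even by (auto elim: evenE)
  next
    case False
    then obtain p where q: "q = 2 * p + 1"
      using oddE by blast
    show ?thesis
    proof (rule Bochner_Integration.integrable_bound)
      show "integrable lborel (\<lambda>x::real. x ^ (2 * p) * exp (- (x ^ 6)) + x ^ (2 * p + 2) * exp (- (x ^ 6)))"
        using even[of p] even[of "p + 1"] by (simp add: algebra_simps)
      show "AE x in lborel. norm ((x::real) ^ q * exp (- (x ^ 6)))
          \<le> norm (x ^ (2 * p) * exp (- (x ^ 6)) + x ^ (2 * p + 2) * exp (- (x ^ 6)))"
      proof (intro AE_I2)
        fix x :: real
        have "norm (x ^ q * exp (- (x ^ 6))) = \<bar>x\<bar> ^ (2 * p + 1) * exp (- (x ^ 6))"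
          by (simp add: q abs_mult power_abs)
        also have "\<dots> \<le> (x ^ (2 * p) + x ^ (2 * p + 2)) * exp (- (x ^ 6))"
          by (intro mult_right_mono abs_odd_power_le) auto
        also have "\<dots> = norm (x ^ (2 * p) * exp (- (x ^ 6)) + x ^ (2 * p + 2) * exp (- (x ^ 6)))"
          using add_nonneg_nonneg[OF zero_le_even_power zero_le_even_power, of "2 * p" "2 * p + 2" x]
          by (simp only: real_norm_def distrib_right[symmetric] abs_mult abs_exp_cancel
              abs_of_nonneg even_add even_mult_iff even_numeral simp_thms)
        finally show "norm (x ^ q * exp (- (x ^ 6))) \<le> \<dots>" .
      qed
    qed simp
  qed
qed

lemma integrable_power_exp_neg_scaled_sextic:
  assumes "c > 0"
  shows "integrable lborel (\<lambda>x::real. x ^ q * exp (- (c * x ^ 6)))"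
proof -
  define r where "r = root 6 c"
  have r: "r > 0" "r ^ 6 = c"
    using assms by (simp_all add: r_def real_root_pow_pos2)
  have "integrable lborel (\<lambda>x::real. (0 + r * x) ^ q * exp (- ((0 + r * x) ^ 6)))"
    using r by (intro lborel_integrable_real_affine integrable_power_exp_neg_sextic) simp
  then have "integrable lborel (\<lambda>x::real. (r * x) ^ q * exp (- ((r * x) ^ 6)) / r ^ q)"
    by simp
  also have "(\<lambda>x::real. (r * x) ^ q * exp (- ((r * x) ^ 6)) / r ^ q) = (\<lambda>x. x ^ q * exp (- (c * x ^ 6)))"
    using r by (auto simp: power_mult_distrib)
  finally show ?thesis .
qed

lemma has_bochner_integral_sextic_moment:
  "has_bochner_integral lborel (\<lambda>x::real. x ^ q * exp (- (x ^ 6))) (sextic_moment q)"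
proof (cases "even q")
  case True
  then obtain p where "q = 2 * p"
    by (auto elim: evenE)
  then show ?thesis
    using nn_integral_even_power_exp_neg_sextic[of p]
    by (intro has_bochner_integral_nn_integral) (auto simp: sextic_moment_def add.commute intro!: Gamma_real_pos less_imp_le)
next
  case False
  have "(\<integral>x. x ^ q * exp (- (x ^ 6)) \<partial>lborel) = (\<integral>x. (- x) ^ q * exp (- ((- x) ^ 6)) \<partial>lborel :: real)"
    using lborel_integral_real_affine[where f = "\<lambda>x. x ^ q * exp (- (x ^ 6))" and c = "-1" and t = 0] by simp
  also have "\<dots> = - (\<integral>x. x ^ q * exp (- (x ^ 6)) \<partial>lborel)"
    using False by (simp add: power_minus_odd)
  finally show ?thesis
    using integrable_power_exp_neg_sextic[of q] False by (simp add: has_bochner_integral_iff sextic_moment_def)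
qed

lemma sextic_moment_add6: "sextic_moment (q + 6) = (real q + 1) / 6 * sextic_moment q"
proof (cases "even q")
  case True
  have "Gamma ((real (q + 6) + 1) / 6) = Gamma ((real q + 1) / 6 + 1)"
    by (simp add: field_simps)
  also have "\<dots> = (real q + 1) / 6 * Gamma ((real q + 1) / 6)"
    by (rule Gamma_plus1) (auto dest: nonpos_Ints_nonpos)
  finally show ?thesis
    using True by (simp add: sextic_moment_def)
qed (simp add: sextic_moment_def)

definition sextic_integral :: "real poly \<Rightarrow> real" where
  "sextic_integral p = (\<integral>x. poly p x * exp (- (x ^ 6)) \<partial>lborel)"

lemma integrable_poly_exp_neg_sextic:
  fixes p :: "real poly"
  shows "integrable lborel (\<lambda>x. poly p x * exp (- (x ^ 6)))"
proof -
  have "integrable lborel (\<lambda>x::real. \<Sum>i\<le>degree p. coeff p i * (x ^ i * exp (- (x ^ 6))))"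
    by (intro Bochner_Integration.integrable_sum integrable_mult_right integrable_power_exp_neg_sextic)
  then show ?thesis
    by (simp only: poly_altdef sum_distrib_right mult.assoc)
qed

lemma sextic_integral_0 [simp]: "sextic_integral 0 = 0"
  by (simp add: sextic_integral_def)

lemma sextic_integral_add: "sextic_integral (p + q) = sextic_integral p + sextic_integral q"
  unfolding sextic_integral_def by (simp add: distrib_right integrable_poly_exp_neg_sextic)

lemma sextic_integral_diff: "sextic_integral (p - q) = sextic_integral p - sextic_integral q"
  unfolding sextic_integral_def by (simp add: left_diff_distrib integrable_poly_exp_neg_sextic)

lemma sextic_integral_smult: "sextic_integral (smult c p) = c * sextic_integral p"
  unfolding sextic_integral_def by (simp add: mult.assoc)

lemma sextic_integral_sum: "sextic_integral (sum f A) = (\<Sum>i\<in>A. sextic_integral (f i))"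
  by (induction A rule: infinite_finite_induct) (simp_all add: sextic_integral_add)

lemma sextic_integral_monom: "sextic_integral (monom c m) = c * sextic_moment m"
  using has_bochner_integral_sextic_moment[of m]
  by (simp add: sextic_integral_def poly_monom mult.assoc has_bochner_integral_iff)

text \<open>Integration by parts; on monomials it is the functional equation of \<open>\<Gamma>\<close>.\<close>
lemma sextic_integral_pderiv: "sextic_integral (pderiv p) = 6 * sextic_integral (monom 1 5 * p)"
proof -
  have monomial: "sextic_integral (pderiv (monom c i)) = 6 * sextic_integral (monom 1 5 * monom c i)" for c i
  proof (cases i)
    case (Suc j)
    then show ?thesis
      using sextic_moment_add6[of j]
      by (simp add: pderiv_monom mult_monom sextic_integral_monom algebra_simps add.commute[of 5])
  qed (simp add: pderiv_monom mult_monom sextic_integral_monom sextic_moment_def)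
  have "sextic_integral (pderiv p) = sextic_integral (\<Sum>i\<le>degree p. pderiv (monom (coeff p i) i))"
    using higher_pderiv_sum[of 1 "\<lambda>i. monom (coeff p i) i" "{..degree p}"]
    by (simp add: poly_as_sum_of_monoms)
  also have "\<dots> = 6 * sextic_integral (monom 1 5 * (\<Sum>i\<le>degree p. monom (coeff p i) i))"
    by (simp add: sextic_integral_sum monomial sum_distrib_left)
  finally show ?thesis
    by (simp add: poly_as_sum_of_monoms)
qed

section \<open>The polynomials of the generating function\<close>

text \<open>The polynomials \<open>Q\<^sub>k\<close> with \<open>G(t, x) = exp (t x\<^sup>4 - t\<^sup>2 x\<^sup>2 / 4) = (\<Sum>k. Q\<^sub>k(x) t\<^sup>k / k!)\<close>;
  the recurrence is the coefficientwise form of \<open>\<partial>\<^sub>t G = (x\<^sup>4 - t x\<^sup>2 / 2) G\<close>.\<close>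
fun gf_poly :: "nat \<Rightarrow> real poly" where
  "gf_poly 0 = 1"
| "gf_poly (Suc 0) = monom 1 4"
| "gf_poly (Suc (Suc k)) =
     monom 1 4 * gf_poly (Suc k) - smult ((real k + 1) / 2) (monom 1 2 * gf_poly k)"

lemma poly_gf_poly_Suc_Suc:
  "poly (gf_poly (Suc (Suc k))) x
     = x ^ 4 * poly (gf_poly (Suc k)) x - (real k + 1) / 2 * (x ^ 2 * poly (gf_poly k) x)"
  by (simp add: poly_monom)

text \<open>The coefficientwise form of \<open>x \<partial>\<^sub>x G = t \<partial>\<^sub>t G + 3 t x\<^sup>4 G\<close>.\<close>
lemma poly_pderiv_gf_poly:
  "x * poly (pderiv (gf_poly k)) x
     = real k * poly (gf_poly k) x + 6 * x ^ 2 * (x ^ 4 * poly (gf_poly k) x - poly (gf_poly (Suc k)) x)"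
proof (induction k rule: gf_poly.induct)
  case 1
  show ?case by (simp add: poly_monom)
next
  case 2
  show ?case by (simp add: pderiv_monom poly_monom eval_nat_numeral algebra_simps)
next
  case (3 k)
  define a b da db where "a = poly (gf_poly k) x" and "b = poly (gf_poly (Suc k)) x"
    and "da = poly (pderiv (gf_poly k)) x" and "db = poly (pderiv (gf_poly (Suc k))) x"
  have IH: "x * da = real k * a + 6 * x ^ 2 * (x ^ 4 * a - b)"
    "x * db = real (Suc k) * b + 3 * (real k + 1) * x ^ 4 * a"
    using "3.IH" by (simp_all add: a_def b_def da_def db_def poly_monom algebra_simps)
  have "x * poly (pderiv (gf_poly (Suc (Suc k)))) x
      = 4 * x ^ 4 * b + x ^ 4 * (x * db) - (real k + 1) / 2 * (2 * x ^ 2 * a + x ^ 2 * (x * da))"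
    by (simp add: a_def b_def da_def db_def pderiv_mult pderiv_diff pderiv_smult pderiv_monom
        poly_monom eval_nat_numeral algebra_simps)
  then show ?case
    unfolding poly_gf_poly_Suc_Suc IH by (simp add: a_def b_def field_simps eval_nat_numeral)
qed

definition quartic_exp_coeff :: "real \<Rightarrow> nat \<Rightarrow> real" where
  "quartic_exp_coeff x i = (x ^ 4) ^ i / fact i"

definition gauss_exp_coeff :: "real \<Rightarrow> nat \<Rightarrow> real" where
  "gauss_exp_coeff x j = (if even j then (- (x\<^sup>2 / 4)) ^ (j div 2) / fact (j div 2) else 0)"

definition gf_coeff :: "real \<Rightarrow> nat \<Rightarrow> real" where
  "gf_coeff x k = (\<Sum>i\<le>k. quartic_exp_coeff x i * gauss_exp_coeff x (k - i))"

lemma quartic_exp_coeff_sums: "(\<lambda>i. quartic_exp_coeff x i * t ^ i) sums exp (t * x ^ 4)"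
  using exp_series_real[of "t * x ^ 4"] by (simp add: quartic_exp_coeff_def power_mult_distrib mult_ac)

lemma abs_quartic_exp_coeff_sums: "(\<lambda>i. \<bar>quartic_exp_coeff x i * t ^ i\<bar>) sums exp (\<bar>t\<bar> * x ^ 4)"
  using exp_series_real[of "\<bar>t\<bar> * x ^ 4"]
  by (simp add: quartic_exp_coeff_def power_mult_distrib abs_mult power_abs mult_ac)

lemma gauss_exp_coeff_even_term:
  "gauss_exp_coeff x (2 * l) * t ^ (2 * l) = (- (t\<^sup>2 * x\<^sup>2 / 4)) ^ l / fact l"
proof -
  have "(- (x\<^sup>2 / 4)) ^ l * (t\<^sup>2) ^ l = (- (x\<^sup>2 / 4) * t\<^sup>2) ^ l"
    by (rule power_mult_distrib[symmetric])
  also have "- (x\<^sup>2 / 4) * t\<^sup>2 = - (t\<^sup>2 * x\<^sup>2 / 4)"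
    by simp
  finally show ?thesis
    by (simp add: gauss_exp_coeff_def power_mult)
qed

lemma gauss_exp_coeff_sums: "(\<lambda>j. gauss_exp_coeff x j * t ^ j) sums exp (- (t\<^sup>2 * x\<^sup>2 / 4))"
proof (rule sums_from_even_terms)
  show "(\<lambda>l. gauss_exp_coeff x (2 * l) * t ^ (2 * l)) sums exp (- (t\<^sup>2 * x\<^sup>2 / 4))"
    unfolding gauss_exp_coeff_even_term by (rule exp_series_real)
qed (simp add: gauss_exp_coeff_def)

lemma abs_gauss_exp_coeff_sums: "(\<lambda>j. \<bar>gauss_exp_coeff x j * t ^ j\<bar>) sums exp (t\<^sup>2 * x\<^sup>2 / 4)"
proof (rule sums_from_even_terms)
  show "(\<lambda>l. \<bar>gauss_exp_coeff x (2 * l) * t ^ (2 * l)\<bar>) sums exp (t\<^sup>2 * x\<^sup>2 / 4)"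
    unfolding gauss_exp_coeff_even_term using exp_series_real[of "t\<^sup>2 * x\<^sup>2 / 4"] by (simp add: power_abs)
qed (simp add: gauss_exp_coeff_def)

lemma quartic_exp_coeff_Suc: "real (Suc i) * quartic_exp_coeff x (Suc i) = x ^ 4 * quartic_exp_coeff x i"
  by (simp add: quartic_exp_coeff_def)

lemma gauss_exp_coeff_Suc_Suc:
  "real (Suc (Suc j)) * gauss_exp_coeff x (Suc (Suc j)) = - (x\<^sup>2 / 2) * gauss_exp_coeff x j"
proof (cases "even j")
  case True
  then obtain l where j: "j = 2 * l"
    by (auto elim: evenE)
  have "gauss_exp_coeff x (Suc (Suc j)) = - (x\<^sup>2 / 4) * (- (x\<^sup>2 / 4)) ^ l / (real (Suc l) * fact l)"
    using j by (simp add: gauss_exp_coeff_def)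
  moreover have "real (Suc (Suc j)) = 2 * real (Suc l)" "real (Suc l) \<noteq> 0"
    using j by simp_all
  ultimately show ?thesis
    using j by (simp add: gauss_exp_coeff_def field_simps del: of_nat_Suc)
qed (simp add: gauss_exp_coeff_def)

lemma gf_coeff_Suc_Suc:
  "real (Suc (Suc k)) * gf_coeff x (Suc (Suc k)) = x ^ 4 * gf_coeff x (Suc k) - x\<^sup>2 / 2 * gf_coeff x k"
proof -
  let ?A = "quartic_exp_coeff x" and ?B = "gauss_exp_coeff x"
  have "real (Suc (Suc k)) * gf_coeff x (Suc (Suc k)) =
      (\<Sum>i\<le>Suc (Suc k). real i * (?A i * ?B (Suc (Suc k) - i))) +
      (\<Sum>i\<le>Suc (Suc k). real (Suc (Suc k) - i) * (?A i * ?B (Suc (Suc k) - i)))"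
    unfolding gf_coeff_def sum_distrib_left sum.distrib[symmetric]
    by (intro sum.cong refl) (simp add: distrib_right[symmetric] of_nat_diff)
  also have "(\<Sum>i\<le>Suc (Suc k). real i * (?A i * ?B (Suc (Suc k) - i)))
      = (\<Sum>i\<le>Suc k. real (Suc i) * ?A (Suc i) * ?B (Suc k - i))"
    by (subst sum.atMost_Suc_shift) (simp add: mult.assoc)
  also have "\<dots> = x ^ 4 * gf_coeff x (Suc k)"
    unfolding gf_coeff_def sum_distrib_left quartic_exp_coeff_Suc by (simp add: mult.assoc)
  also have "(\<Sum>i\<le>Suc (Suc k). real (Suc (Suc k) - i) * (?A i * ?B (Suc (Suc k) - i)))
      = (\<Sum>i\<le>k. real (Suc (Suc k) - i) * (?A i * ?B (Suc (Suc k) - i)))"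
    by (simp add: gauss_exp_coeff_def)
  also have "\<dots> = (\<Sum>i\<le>k. ?A i * (real (Suc (Suc (k - i))) * ?B (Suc (Suc (k - i)))))"
    by (intro sum.cong refl) (simp add: Suc_diff_le)
  also have "\<dots> = - (x\<^sup>2 / 2) * gf_coeff x k"
    unfolding gf_coeff_def sum_distrib_left gauss_exp_coeff_Suc_Suc by (simp add: mult_ac)
  finally show ?thesis
    by simp
qed

lemma fact_mult_gf_coeff: "fact k * gf_coeff x k = poly (gf_poly k) x"
proof (induction k rule: gf_poly.induct)
  case (3 k)
  have "fact (Suc (Suc k)) * gf_coeff x (Suc (Suc k))
      = fact (Suc k) * (real (Suc (Suc k)) * gf_coeff x (Suc (Suc k)))"
    by (simp only: fact_Suc[of "Suc k"] of_nat_mult mult_ac)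
  also have "\<dots> = x ^ 4 * (fact (Suc k) * gf_coeff x (Suc k)) - (real k + 1) / 2 * (x\<^sup>2 * (fact k * gf_coeff x k))"
    by (simp only: gf_coeff_Suc_Suc fact_Suc[of k] of_nat_mult) (simp add: algebra_simps)
  also have "\<dots> = poly (gf_poly (Suc (Suc k))) x"
    by (simp only: "3.IH" poly_gf_poly_Suc_Suc)
  finally show ?case .
qed (simp_all add: gf_coeff_def quartic_exp_coeff_def gauss_exp_coeff_def poly_monom)

lemma gf_poly_term_eq_Cauchy:
  "poly (gf_poly k) x / fact k * t ^ k
   = (\<Sum>i\<le>k. (quartic_exp_coeff x i * t ^ i) * (gauss_exp_coeff x (k - i) * t ^ (k - i)))"
proof -
  have coeff: "poly (gf_poly k) x / fact k = gf_coeff x k"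
    using fact_mult_gf_coeff[of k x] by (simp add: divide_eq_eq mult.commute)
  have split_term: "quartic_exp_coeff x i * gauss_exp_coeff x (k - i) * t ^ k
      = (quartic_exp_coeff x i * t ^ i) * (gauss_exp_coeff x (k - i) * t ^ (k - i))" if "i \<le> k" for i
  proof -
    have "t ^ k = t ^ i * t ^ (k - i)"
      using that by (simp add: power_add[symmetric])
    then show ?thesis
      by (simp only: mult_ac)
  qed
  show ?thesis
    unfolding coeff gf_coeff_def sum_distrib_right using split_term by (intro sum.cong) auto
qed

lemma gf_poly_sums: "(\<lambda>k. poly (gf_poly k) x / fact k * t ^ k) sums exp (t * x ^ 4 - t\<^sup>2 * x\<^sup>2 / 4)"
proof -
  have "(\<lambda>k. \<Sum>i\<le>k. (quartic_exp_coeff x i * t ^ i) * (gauss_exp_coeff x (k - i) * t ^ (k - i)))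
      sums ((\<Sum>i. quartic_exp_coeff x i * t ^ i) * (\<Sum>j. gauss_exp_coeff x j * t ^ j))"
    using abs_quartic_exp_coeff_sums abs_gauss_exp_coeff_sums
    by (intro Cauchy_product_sums) (auto simp: sums_iff)
  also have "(\<Sum>i. quartic_exp_coeff x i * t ^ i) * (\<Sum>j. gauss_exp_coeff x j * t ^ j)
      = exp (t * x ^ 4 - t\<^sup>2 * x\<^sup>2 / 4)"
    unfolding sums_unique[OF quartic_exp_coeff_sums, symmetric] sums_unique[OF gauss_exp_coeff_sums, symmetric]
    by (metis exp_add diff_conv_add_uminus)
  finally show ?thesis
    unfolding gf_poly_term_eq_Cauchy .
qed

lemma gf_poly_series_abs:
  shows "summable (\<lambda>k. \<bar>poly (gf_poly k) x / fact k * t ^ k\<bar>)"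
    and "(\<Sum>k. \<bar>poly (gf_poly k) x / fact k * t ^ k\<bar>) \<le> exp (\<bar>t\<bar> * x ^ 4 + t\<^sup>2 * x\<^sup>2 / 4)"
proof -
  define d where "d k = (\<Sum>i\<le>k. \<bar>quartic_exp_coeff x i * t ^ i\<bar> * \<bar>gauss_exp_coeff x (k - i) * t ^ (k - i)\<bar>)" for k
  have "d sums ((\<Sum>i. \<bar>quartic_exp_coeff x i * t ^ i\<bar>) * (\<Sum>j. \<bar>gauss_exp_coeff x j * t ^ j\<bar>))"
    unfolding d_def using abs_quartic_exp_coeff_sums abs_gauss_exp_coeff_sums
    by (intro Cauchy_product_sums) (auto simp: sums_iff)
  also have "(\<Sum>i. \<bar>quartic_exp_coeff x i * t ^ i\<bar>) * (\<Sum>j. \<bar>gauss_exp_coeff x j * t ^ j\<bar>)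
      = exp (\<bar>t\<bar> * x ^ 4 + t\<^sup>2 * x\<^sup>2 / 4)"
    unfolding sums_unique[OF abs_quartic_exp_coeff_sums, symmetric]
      sums_unique[OF abs_gauss_exp_coeff_sums, symmetric] exp_add ..
  finally have d: "d sums exp (\<bar>t\<bar> * x ^ 4 + t\<^sup>2 * x\<^sup>2 / 4)" .
  have le: "\<bar>poly (gf_poly k) x / fact k * t ^ k\<bar> \<le> d k" for k
    unfolding gf_poly_term_eq_Cauchy d_def abs_mult[symmetric] by (rule sum_abs)
  show summable: "summable (\<lambda>k. \<bar>poly (gf_poly k) x / fact k * t ^ k\<bar>)"
    using le by (intro summable_comparison_test[OF _ sums_summable[OF d]]) auto
  have "(\<Sum>k. \<bar>poly (gf_poly k) x / fact k * t ^ k\<bar>) \<le> suminf d"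
    using le summable sums_summable[OF d] by (rule suminf_le)
  then show "(\<Sum>k. \<bar>poly (gf_poly k) x / fact k * t ^ k\<bar>) \<le> exp (\<bar>t\<bar> * x ^ 4 + t\<^sup>2 * x\<^sup>2 / 4)"
    using d by (simp add: sums_iff)
qed

section \<open>The moments satisfy a recurrence of step three\<close>

definition moment_certificate :: "nat \<Rightarrow> nat \<Rightarrow> real poly" where
  "moment_certificate n k = monom 1 (2 * n + 1) *
     (smult (1 - real n + real k) (gf_poly k) - smult 3 (monom 1 2 * gf_poly (Suc k)))"

lemma poly_pderiv_moment_certificate:
  fixes n k :: nat and x :: real
  defines "s \<equiv> (1 - real n + real k) * poly (gf_poly k) x - 3 * x ^ 2 * poly (gf_poly (Suc k)) x"
  shows "poly (pderiv (moment_certificate n k)) x = x ^ (2 * n) *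
    ((2 * real n + 1) * s + (1 - real n + real k) * (x * poly (pderiv (gf_poly k)) x)
      - 6 * x ^ 2 * poly (gf_poly (Suc k)) x - 3 * x ^ 2 * (x * poly (pderiv (gf_poly (Suc k))) x))"
  unfolding moment_certificate_def
  by (simp add: pderiv_mult pderiv_diff pderiv_smult pderiv_monom poly_monom s_def algebra_simps power2_eq_square)

lemma moment_certificate_identity:
  "pderiv (moment_certificate n k) - smult 6 (monom 1 5 * moment_certificate n k)
   = monom 1 (2 * n) * (smult 18 (gf_poly (k + 3))
       + smult ((real k + 1 - real n) * (real k + 1 + 2 * real n)) (gf_poly k))"
  (is "?lhs = ?rhs")
proof (rule poly_eq_poly_eq_iff[THEN iffD1, OF ext])
  fix x :: real
  define a b da db where "a = poly (gf_poly k) x" and "b = poly (gf_poly (Suc k)) x"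
    and "da = poly (pderiv (gf_poly k)) x" and "db = poly (pderiv (gf_poly (Suc k))) x"
  have deriv: "x * da = real k * a + 6 * x ^ 2 * (x ^ 4 * a - b)"
    "x * db = real (Suc k) * b + 3 * (real k + 1) * x ^ 4 * a"
    using poly_pderiv_gf_poly[of x k] poly_pderiv_gf_poly[of x "Suc k"]
    by (simp_all add: a_def b_def da_def db_def poly_monom algebra_simps eval_nat_numeral)
  have Q3: "poly (gf_poly (k + 3)) x = x ^ 4 * (x ^ 4 * b - (real k + 1) / 2 * (x ^ 2 * a)) - (real k + 2) / 2 * (x ^ 2 * b)"
    by (simp add: a_def b_def numeral_3_eq_3 poly_monom algebra_simps)
  show "poly ?lhs x = poly ?rhs x"
    unfolding poly_diff poly_pderiv_moment_certificate poly_smult poly_mult poly_monom Q3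
      deriv[unfolded a_def b_def da_def db_def]
    by (simp add: moment_certificate_def poly_monom a_def b_def field_simps eval_nat_numeral)
qed

definition gf_moment :: "nat \<Rightarrow> nat \<Rightarrow> real" where
  "gf_moment n k = sextic_integral (monom 1 (2 * n) * gf_poly k)"

lemma gf_moment_recurrence:
  "18 * gf_moment n (k + 3) = - ((real k + 1 - real n) * (real k + 1 + 2 * real n)) * gf_moment n k"
proof -
  define c where "c = (real k + 1 - real n) * (real k + 1 + 2 * real n)"
  have "sextic_integral (pderiv (moment_certificate n k) - smult 6 (monom 1 5 * moment_certificate n k)) = 0"
    by (simp add: sextic_integral_diff sextic_integral_smult sextic_integral_pderiv)
  then have "18 * gf_moment n (k + 3) + c * gf_moment n k = 0"
    unfolding moment_certificate_identity c_def[symmetric]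
    by (simp add: gf_moment_def distrib_left sextic_integral_add sextic_integral_smult mult_smult_right)
  then show ?thesis
    by (simp add: c_def eq_neg_iff_add_eq_0)
qed

lemma gf_moment_0: "gf_moment n 0 = Gamma (real n / 3 + 1 / 6) / 3"
  by (simp add: gf_moment_def sextic_integral_monom sextic_moment_def add_divide_distrib)

lemma gf_moment_1: "gf_moment n 1 = Gamma (real n / 3 + 5 / 6) / 3"
  by (simp add: gf_moment_def mult_monom sextic_integral_monom sextic_moment_def field_simps)

lemma gf_moment_2: "gf_moment n 2 = real n / 9 * Gamma (real n / 3 + 1 / 2)"
proof -
  have "gf_poly 2 = gf_poly (Suc (Suc 0))"
    by (simp add: numeral_2_eq_2)
  also have "\<dots> = monom 1 8 - smult (1 / 2) (monom 1 2)"
    by (simp only: gf_poly.simps) (simp add: mult_monom)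
  finally have "monom 1 (2 * n) * gf_poly 2 = monom 1 (2 * n + 2 + 6) - smult (1 / 2) (monom 1 (2 * n + 2))"
    by (simp add: mult_monom right_diff_distrib mult_smult_right add.commute)
  then have "gf_moment n 2 = sextic_moment (2 * n + 2 + 6) - sextic_moment (2 * n + 2) / 2"
    by (simp add: gf_moment_def sextic_integral_diff sextic_integral_monom sextic_integral_smult)
  also have "\<dots> = real n / 3 * sextic_moment (2 * n + 2)"
    unfolding sextic_moment_add6 by (simp add: field_simps)
  also have "\<dots> = real n / 9 * Gamma (real n / 3 + 1 / 2)"
    by (simp add: sextic_moment_def field_simps)
  finally show ?thesis .
qed

lemma gf_moment_term_recurrence:
  "(real k + 1) * (real k + 2) * (real k + 3) * (gf_moment n (k + 3) / fact (k + 3) * t ^ (k + 3))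
   = - ((real k + 1 - real n) * (real k + 1 + 2 * real n)) / 18 * t ^ 3 * (gf_moment n k / fact k * t ^ k)"
proof -
  define P where "P = (real k + 1) * (real k + 2) * (real k + 3)"
  have fact: "(fact (k + 3) :: real) = P * fact k"
    by (simp add: P_def numeral_3_eq_3 algebra_simps)
  have "P \<noteq> 0"
    unfolding P_def by (intro no_zero_divisors) (simp_all add: add_eq_0_iff_both_eq_0)
  have moment: "gf_moment n (k + 3) = - ((real k + 1 - real n) * (real k + 1 + 2 * real n)) / 18 * gf_moment n k"
    using gf_moment_recurrence[of n k] by simp
  show ?thesis
    unfolding P_def[symmetric] fact moment using \<open>P \<noteq> 0\<close> by (simp add: power_add field_simps)
qed

section \<open>Termwise integration\<close>

lemma integrable_tilted_sextic:
  fixes t :: real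
  shows "integrable lborel (\<lambda>x::real. x ^ (2 * n) * exp (- (x ^ 6)) * exp (\<bar>t\<bar> * x ^ 4 + t\<^sup>2 * x\<^sup>2 / 4))"
proof (rule Bochner_Integration.integrable_bound)
  define C :: real
    where "C = \<bar>t\<bar> * (2 * \<bar>t\<bar> + 2 * (t\<^sup>2 / 4) + 1)\<^sup>2 + t\<^sup>2 / 4 * (2 * \<bar>t\<bar> + 2 * (t\<^sup>2 / 4) + 1)"
  show "integrable lborel (\<lambda>x::real. exp C * (x ^ (2 * n) * exp (- (1 / 2 * x ^ 6))))"
    by (intro integrable_mult_right integrable_power_exp_neg_scaled_sextic) simp
  show "AE x in lborel. norm (x ^ (2 * n) * exp (- (x ^ 6)) * exp (\<bar>t\<bar> * x ^ 4 + t\<^sup>2 * x\<^sup>2 / 4))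
      \<le> norm (exp C * (x ^ (2 * n) * exp (- (1 / 2 * x ^ 6))))"
  proof (intro AE_I2)
    fix x :: real
    have "\<bar>t\<bar> * (x\<^sup>2)\<^sup>2 + t\<^sup>2 / 4 * x\<^sup>2 - (x\<^sup>2) ^ 3 / 2 \<le> C"
      unfolding C_def by (rule quadratic_minus_half_cube_le) auto
    then have "exp (- (x ^ 6)) * exp (\<bar>t\<bar> * x ^ 4 + t\<^sup>2 * x\<^sup>2 / 4) \<le> exp C * exp (- (1 / 2 * x ^ 6))"
      by (simp add: exp_add[symmetric] power_mult[symmetric])
    then have "x ^ (2 * n) * (exp (- (x ^ 6)) * exp (\<bar>t\<bar> * x ^ 4 + t\<^sup>2 * x\<^sup>2 / 4))
        \<le> x ^ (2 * n) * (exp C * exp (- (1 / 2 * x ^ 6)))"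
      by (intro mult_left_mono) (simp_all add: zero_le_even_power)
    then show "norm (x ^ (2 * n) * exp (- (x ^ 6)) * exp (\<bar>t\<bar> * x ^ 4 + t\<^sup>2 * x\<^sup>2 / 4))
        \<le> norm (exp C * (x ^ (2 * n) * exp (- (1 / 2 * x ^ 6))))"
      by (simp add: abs_mult zero_le_even_power mult_ac)
  qed
qed measurable

definition mu_term :: "nat \<Rightarrow> real \<Rightarrow> nat \<Rightarrow> real \<Rightarrow> real" where
  "mu_term n t k x = x ^ (2 * n) * exp (- (x ^ 6)) * (poly (gf_poly k) x / fact k * t ^ k)"

lemma mu_term_eq:
  "mu_term n t k = (\<lambda>x. t ^ k / fact k * (poly (monom 1 (2 * n) * gf_poly k) x * exp (- (x ^ 6))))"
  by (auto simp: fun_eq_iff mu_term_def poly_monom)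

lemma integrable_mu_term: "integrable lborel (mu_term n t k)"
  unfolding mu_term_eq by (intro integrable_mult_right integrable_poly_exp_neg_sextic)

lemma integral_mu_term: "(\<integral>x. mu_term n t k x \<partial>lborel) = gf_moment n k / fact k * t ^ k"
  unfolding mu_term_eq by (simp add: gf_moment_def sextic_integral_def)

lemma mu_term_sums: "(\<lambda>k. mu_term n t k x) sums (x ^ (2 * n) * exp (- (x ^ 6 - t * x ^ 4 + t\<^sup>2 / 4 * x\<^sup>2)))"
proof -
  have "(\<lambda>k. mu_term n t k x) sums (x ^ (2 * n) * exp (- (x ^ 6)) * exp (t * x ^ 4 - t\<^sup>2 * x\<^sup>2 / 4))"
    unfolding mu_term_def by (intro sums_mult gf_poly_sums)
  then show ?thesis
    by (simp add: mult.assoc exp_add[symmetric] algebra_simps)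
qed

lemma abs_mu_term: "\<bar>mu_term n t k x\<bar> = x ^ (2 * n) * exp (- (x ^ 6)) * \<bar>poly (gf_poly k) x / fact k * t ^ k\<bar>"
  by (simp add: mu_term_def abs_mult zero_le_even_power)

lemma summable_abs_mu_term: "summable (\<lambda>k. \<bar>mu_term n t k x\<bar>)"
  unfolding abs_mu_term by (intro summable_mult gf_poly_series_abs(1))

lemma sum_abs_mu_term_le:
  "(\<Sum>k\<le>N. \<bar>mu_term n t k x\<bar>) \<le> x ^ (2 * n) * exp (- (x ^ 6)) * exp (\<bar>t\<bar> * x ^ 4 + t\<^sup>2 * x\<^sup>2 / 4)"
proof -
  have "(\<Sum>k\<le>N. \<bar>poly (gf_poly k) x / fact k * t ^ k\<bar>) \<le> (\<Sum>k. \<bar>poly (gf_poly k) x / fact k * t ^ k\<bar>)"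
    by (intro sum_le_suminf gf_poly_series_abs(1)) auto
  also have "\<dots> \<le> exp (\<bar>t\<bar> * x ^ 4 + t\<^sup>2 * x\<^sup>2 / 4)"
    by (rule gf_poly_series_abs(2))
  finally show ?thesis
    unfolding abs_mu_term sum_distrib_left[symmetric]
    by (intro mult_left_mono) (simp_all add: zero_le_even_power)
qed

lemma summable_integral_abs_mu_term: "summable (\<lambda>k. \<integral>x. \<bar>mu_term n t k x\<bar> \<partial>lborel)"
proof (rule bounded_imp_summable)
  fix N
  have "(\<Sum>k\<le>N. \<integral>x. \<bar>mu_term n t k x\<bar> \<partial>lborel) = (\<integral>x. (\<Sum>k\<le>N. \<bar>mu_term n t k x\<bar>) \<partial>lborel)"
    using integrable_mu_term
    by (simp add: Bochner_Integration.integral_sum integrable_norm[simplified real_norm_def])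
  also have "\<dots> \<le> (\<integral>x. x ^ (2 * n) * exp (- (x ^ 6)) * exp (\<bar>t\<bar> * x ^ 4 + t\<^sup>2 * x\<^sup>2 / 4) \<partial>lborel)"
    using integrable_mu_term sum_abs_mu_term_le integrable_tilted_sextic
    by (intro integral_mono) (auto intro: integrable_norm[simplified real_norm_def])
  finally show "(\<Sum>k\<le>N. \<integral>x. \<bar>mu_term n t k x\<bar> \<partial>lborel) \<le> \<dots>" .
qed simp

lemma mu_series:
  fixes n :: nat and t :: real
  shows "(\<lambda>k. gf_moment n k / fact k * t ^ k) sums mu n t"
    and "summable (\<lambda>k. \<bar>gf_moment n k / fact k * t ^ k\<bar>)"
proof -
  have "(\<lambda>k. \<integral>x. mu_term n t k x \<partial>lborel) sums (\<integral>x. (\<Sum>k. mu_term n t k x) \<partial>lborel)"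
    using integrable_mu_term summable_abs_mu_term summable_integral_abs_mu_term
    by (intro sums_integral) auto
  then show "(\<lambda>k. gf_moment n k / fact k * t ^ k) sums mu n t"
    using mu_term_sums by (simp add: integral_mu_term mu_def sums_iff)
  show "summable (\<lambda>k. \<bar>gf_moment n k / fact k * t ^ k\<bar>)"
    unfolding integral_mu_term[symmetric]
    by (rule summable_comparison_test[OF _ summable_integral_abs_mu_term])
       (auto intro: integral_abs_bound)
qed

lemma mu_series_residue_eq_hyp2F2:
  fixes n j :: nat and t a1 a2 b1 b2 :: real
  assumes "j < 3"
    and a: "a1 = (real j + 1 - real n) / 3" "a2 = (real j + 1 + 2 * real n) / 3"
    and b: "b1 > 0" "b2 > 0"
      "\<And>m. 27 * (b1 + real m) * (b2 + real m) * (real m + 1)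
         = (real (3 * m + j) + 1) * (real (3 * m + j) + 2) * (real (3 * m + j) + 3)"
  shows "(\<Sum>m. gf_moment n (3 * m + j) / fact (3 * m + j) * t ^ (3 * m + j))
         = gf_moment n j / fact j * t ^ j * hyp2F2 a1 a2 b1 b2 (- (t ^ 3) / 54)"
proof -
  define u where "u k = gf_moment n k / fact k * t ^ k" for k
  have "summable (\<lambda>k. norm (u k))"
    using mu_series(2)[of n t] by (simp add: u_def)
  then have "summable (\<lambda>m. u (3 * m + j))"
    by (rule suminf_split_residues(1)) (use \<open>j < 3\<close> in auto)
  moreover have "(b1 + real m) * (b2 + real m) * (real m + 1) * u (3 * Suc m + j)
      = (a1 + real m) * (a2 + real m) * (- (t ^ 3) / 54) * u (3 * m + j)" for m
  proof -
    have "(b1 + real m) * (b2 + real m) * (real m + 1) * u (3 * Suc m + j)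
        = 27 * (b1 + real m) * (b2 + real m) * (real m + 1) * u (3 * m + j + 3) / 27"
      by (simp add: add.commute add.left_commute)
    also have "\<dots> = (real (3 * m + j) + 1) * (real (3 * m + j) + 2) * (real (3 * m + j) + 3) * u (3 * m + j + 3) / 27"
      by (simp only: b(3))
    also have "\<dots> = - ((real (3 * m + j) + 1 - real n) * (real (3 * m + j) + 1 + 2 * real n)) / 18
        * t ^ 3 * u (3 * m + j) / 27"
      unfolding u_def gf_moment_term_recurrence ..
    also have "\<dots> = (a1 + real m) * (a2 + real m) * (- (t ^ 3) / 54) * u (3 * m + j)"
      by (simp add: a field_simps)
    finally show ?thesis .
  qed
  ultimately have "(\<Sum>m. u (3 * m + j)) = u (3 * 0 + j) * hyp2F2 a1 a2 b1 b2 (- (t ^ 3) / 54)"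
    using b by (intro suminf_eq_hyp2F2) auto
  then show ?thesis
    by (simp add: u_def)
qed

theorem lemma6p5:
  fixes \<tau> :: real and n :: nat
  shows "mu n \<tau> =
      1/3 * Gamma (real n / 3 + 1/6)
        * hyp2F2 (1/3 - real n / 3) (1/3 + 2 * real n / 3) (1/3) (2/3) (- (\<tau> ^ 3) / 54)
    + 1/3 * \<tau> * Gamma (real n / 3 + 5/6)
        * hyp2F2 (2/3 - real n / 3) (2/3 + 2 * real n / 3) (2/3) (4/3) (- (\<tau> ^ 3) / 54)
    + real n * \<tau>\<^sup>2 / 18 * Gamma (real n / 3 + 1/2)
        * hyp2F2 (1 - real n / 3) (1 + 2 * real n / 3) (4/3) (5/3) (- (\<tau> ^ 3) / 54)"
proof -
  define u where "u k = gf_moment n k / fact k * \<tau> ^ k" for k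
  have initial_terms: "u 0 = 1/3 * Gamma (real n / 3 + 1/6)"
    "u 1 = 1/3 * \<tau> * Gamma (real n / 3 + 5/6)" "u 2 = real n * \<tau>\<^sup>2 / 18 * Gamma (real n / 3 + 1/2)"
    by (simp_all add: u_def gf_moment_0 gf_moment_1[unfolded One_nat_def] gf_moment_2)
  have "u sums mu n \<tau>" "summable (\<lambda>k. norm (u k))"
    using mu_series[of n \<tau>] unfolding u_def[abs_def] by simp_all
  then have "mu n \<tau> = (\<Sum>j<3. \<Sum>m. u (3 * m + j))"
    using suminf_split_residues(2)[of u 3] by (simp add: sums_iff)
  also have "\<dots> = (\<Sum>m. u (3 * m + 0)) + (\<Sum>m. u (3 * m + 1)) + (\<Sum>m. u (3 * m + 2))"
    by (simp add: numeral_3_eq_3)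
  also have "(\<Sum>m. u (3 * m + 0))
      = u 0 * hyp2F2 (1/3 - real n / 3) (1/3 + 2 * real n / 3) (1/3) (2/3) (- (\<tau> ^ 3) / 54)"
    unfolding u_def by (rule mu_series_residue_eq_hyp2F2) (simp_all add: field_simps)
  also have "(\<Sum>m. u (3 * m + 1))
      = u 1 * hyp2F2 (2/3 - real n / 3) (2/3 + 2 * real n / 3) (2/3) (4/3) (- (\<tau> ^ 3) / 54)"
    unfolding u_def by (rule mu_series_residue_eq_hyp2F2) (simp_all add: field_simps)
  also have "(\<Sum>m. u (3 * m + 2))
      = u 2 * hyp2F2 (1 - real n / 3) (1 + 2 * real n / 3) (4/3) (5/3) (- (\<tau> ^ 3) / 54)"
    unfolding u_def by (rule mu_series_residue_eq_hyp2F2) (simp_all add: field_simps)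
  finally show ?thesis
    by (simp only: initial_terms)
qed

end
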